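(* Let $U^{*}$ denote the optimal value of the problem $$\max_{\{e^{\mathcal S}(t),\,t\ge 1\}} \ \bar U^{\mathcal S}=\lim_{\tau\to\infty}\frac1\tau\sum_{t=1}^{\tau}U(e^{\mathcal S}(t))$$ subject to $B(t)=\max\{0,\min\{M,\,B(t-1)+r(t)-e^{\mathcal S}(t-1)\}\}$ and $e^{\mathcal S}(t)\le B(t)$ for all $t$. Then $U^{*}\le U(\mu)$.
   Context: Time is discrete, $t=1,2,\dots$. A node has a battery of finite capacity $M$ (units of energy) with state $B(t)\in[0,M]$. The battery is replenished by a nonnegative ergodic stochastic process $\{r(t),t\ge1\}$ with long-term mean $\lim_{\tau\to\infty}\frac1\tau\sum_{t=1}^\tau r(t)=\mu$. A power allocation policy $\mathcal S$ draws energy $e^{\mathcal S}(t)\ge0$ from the battery at time $t$. The utility function $U$ is concave and non-decreasing on $[0,\infty)$; the maximization is over (ergodic) energy management policies. *)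

theory Defs
  imports "HOL-Analysis.Analysis"
begin

definition feasible_policy :: "real \<Rightarrow> (nat \<Rightarrow> real) \<Rightarrow> real \<Rightarrow> (nat \<Rightarrow> real) \<Rightarrow> bool" where
  "feasible_policy M r B0 e \<longleftrightarrow>
     (\<forall>t. 0 \<le> e t) \<and>
     (\<exists>B :: nat \<Rightarrow> real. B 0 = B0 \<and>
        (\<forall>t\<ge>1. B t = max 0 (min M (B (t - 1) + r t - e (t - 1)))) \<and>
        (\<forall>t\<ge>1. e t \<le> B t))"

definition avg_utility :: "(real \<Rightarrow> real) \<Rightarrow> (nat \<Rightarrow> real) \<Rightarrow> nat \<Rightarrow> real" where
  "avg_utility U e \<tau> = (\<Sum>t=1..\<tau>. U (e t)) / real \<tau>"

definition opt_value :: "real \<Rightarrow> (nat \<Rightarrow> real) \<Rightarrow> real \<Rightarrow> (real \<Rightarrow> real) \<Rightarrow> ereal" where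
  "opt_value M r B0 U =
     (SUP e \<in> {e. feasible_policy M r B0 e \<and> convergent (avg_utility U e)}.
        ereal (lim (avg_utility U e)))"

end

theory Submission
  imports Defs
begin

text \<open>Whatever a feasible policy draws in the first n slots was either harvested by slot n + 1
  or stored in the battery at the start, so it is at most M plus the harvest. By Jensen's
  inequality and monotonicity of U the average utility over n slots is then at most
  U((M + harvest)/n), and this bound tends to U \<mu> by continuity of U.\<close>

lemma feasible_policy_battery_step:
  fixes M B0 :: real and r e :: "nat \<Rightarrow> real"
  assumes "feasible_policy M r B0 e" and "0 \<le> M" and "\<And>t. 0 \<le> r t"
  obtains B where "\<And>t. t \<ge> 1 \<Longrightarrow> 0 \<le> B t \<and> B t \<le> M"
    and "\<And>t. t \<ge> 1 \<Longrightarrow> B (Suc t) + e t \<le> B t + r (Suc t)"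
proof -
  from assms(1) obtain B where B: "\<And>t. t \<ge> 1 \<Longrightarrow> B t = max 0 (min M (B (t - 1) + r t - e (t - 1)))"
    and e_le_B: "\<And>t. t \<ge> 1 \<Longrightarrow> e t \<le> B t"
    unfolding feasible_policy_def by blast
  have "B (Suc t) + e t \<le> B t + r (Suc t)" if "t \<ge> 1" for t
  proof -
    have "0 \<le> B t + r (Suc t) - e t"
      using e_le_B[OF that] assms(3)[of "Suc t"] by linarith
    moreover have "B (Suc t) = max 0 (min M (B t + r (Suc t) - e t))"
      using B[of "Suc t"] by simp
    ultimately show ?thesis by linarith
  qed
  moreover have "0 \<le> B t \<and> B t \<le> M" if "t \<ge> 1" for t
    using B[OF that] \<open>0 \<le> M\<close> by auto
  ultimately show thesis using that by blast
qed

lemma feasible_policy_energy_bound: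
  fixes M B0 :: real and r e :: "nat \<Rightarrow> real"
  assumes feasible: "feasible_policy M r B0 e" and "0 \<le> M" and r_nonneg: "\<And>t. 0 \<le> r t"
  shows "(\<Sum>t=1..n. e t) \<le> M + (\<Sum>t=1..Suc n. r t)"
proof -
  obtain B where B_bounds: "\<And>t. t \<ge> 1 \<Longrightarrow> 0 \<le> B t \<and> B t \<le> M"
    and B_step: "\<And>t. t \<ge> 1 \<Longrightarrow> B (Suc t) + e t \<le> B t + r (Suc t)"
    using feasible_policy_battery_step[OF assms] by blast
  have telescope: "B (Suc n) + (\<Sum>t=1..n. e t) \<le> B 1 + (\<Sum>t=2..Suc n. r t)" for n
  proof (induction n)
    case 0
    then show ?case by simp
  next
    case (Suc n)
    with B_step[of "Suc n"] show ?case by simp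
  qed
  have "(\<Sum>t=2..Suc n. r t) \<le> (\<Sum>t=1..Suc n. r t)"
    by (rule sum_mono2) (use r_nonneg in auto)
  with telescope[of n] B_bounds[of 1] B_bounds[of "Suc n"] show ?thesis by simp
qed

lemma concave_on_average_le:
  fixes U :: "real \<Rightarrow> real" and x :: "'a \<Rightarrow> real"
  assumes "concave_on C U" and "finite A" and "A \<noteq> {}" and "\<And>i. i \<in> A \<Longrightarrow> x i \<in> C"
  shows "(\<Sum>i\<in>A. U (x i)) / card A \<le> U ((\<Sum>i\<in>A. x i) / card A)"
proof -
  have "(\<Sum>i\<in>A. (1 / card A) * U (x i)) \<le> U (\<Sum>i\<in>A. (1 / card A) *\<^sub>R x i)"
    by (rule concave_on_sum[OF assms(2,3,1)]) (use assms in auto)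
  then show ?thesis
    by (simp add: sum_distrib_left[symmetric] sum_divide_distrib[symmetric])
qed

lemma feasible_policy_avg_utility_le:
  fixes M B0 :: real and r e :: "nat \<Rightarrow> real" and U :: "real \<Rightarrow> real"
  assumes feasible: "feasible_policy M r B0 e" and "0 \<le> M" and r_nonneg: "\<And>t. 0 \<le> r t"
    and "concave_on {0..} U" and "mono_on {0..} U" and "n \<ge> 1"
  shows "avg_utility U e n \<le> U ((M + (\<Sum>t=1..Suc n. r t)) / n)"
proof -
  have e_nonneg: "\<And>t. 0 \<le> e t"
    using feasible unfolding feasible_policy_def by blast
  have "avg_utility U e n \<le> U ((\<Sum>t=1..n. e t) / n)"
    using concave_on_average_le[OF \<open>concave_on {0..} U\<close>, of "{1..n}" e] \<open>n \<ge> 1\<close> e_nonneg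
    by (simp add: avg_utility_def)
  also have "\<dots> \<le> U ((M + (\<Sum>t=1..Suc n. r t)) / n)"
  proof (rule mono_onD[OF \<open>mono_on {0..} U\<close>])
    show "(\<Sum>t=1..n. e t) / n \<le> (M + (\<Sum>t=1..Suc n. r t)) / n"
      using feasible_policy_energy_bound[OF feasible \<open>0 \<le> M\<close> r_nonneg, of n]
      by (simp add: divide_right_mono)
  qed (use e_nonneg r_nonneg \<open>0 \<le> M\<close> in \<open>auto intro!: sum_nonneg add_nonneg_nonneg divide_nonneg_nonneg\<close>)
  finally show ?thesis .
qed

lemma average_shifted_tendsto:
  fixes r :: "nat \<Rightarrow> real"
  assumes "(\<lambda>n. (\<Sum>t=1..n. r t) / n) \<longlonglongrightarrow> \<mu>"
  shows "(\<lambda>n. (c + (\<Sum>t=1..Suc n. r t)) / n) \<longlonglongrightarrow> \<mu>"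
proof -
  have rescale: "c / n + s / Suc n * (1 + 1 / n) = (c + s) / n" if "n > 0" for n :: nat and s
    using that by (simp add: divide_simps) (simp add: algebra_simps)
  have "(\<lambda>n. c / n + (\<Sum>t=1..Suc n. r t) / Suc n * (1 + 1 / n)) \<longlonglongrightarrow> 0 + \<mu> * (1 + 0)"
    using LIMSEQ_Suc[OF assms]
    by (intro tendsto_intros lim_const_over_n) simp_all
  moreover have "\<forall>\<^sub>F n in sequentially.
      c / n + (\<Sum>t=1..Suc n. r t) / Suc n * (1 + 1 / n) = (c + (\<Sum>t=1..Suc n. r t)) / n"
    using eventually_gt_at_top[of 0] by (rule eventually_mono) (rule rescale)
  ultimately show ?thesis
    by (simp add: Lim_transform_eventually)
qed

theorem lemma1:
  fixes M B0 \<mu> :: real and r :: "nat \<Rightarrow> real" and U :: "real \<Rightarrow> real"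
  assumes "0 < M" and "0 \<le> B0" and "B0 \<le> M"
    and "\<And>t. 0 \<le> r t"
    and "(\<lambda>\<tau>. (\<Sum>t=1..\<tau>. r t) / real \<tau>) \<longlonglongrightarrow> \<mu>"
    and "concave_on {0..} U" and "mono_on {0..} U"
    and "continuous_on {0..} U"
  shows "opt_value M r B0 U \<le> ereal (U \<mu>)"
proof -
  define bound where "bound n = (M + (\<Sum>t=1..Suc n. r t)) / n" for n
  have bound_nonneg: "bound n \<in> {0..}" for n
    using assms(1,4) by (simp add: bound_def sum_nonneg)
  have "bound \<longlonglongrightarrow> \<mu>"
    unfolding bound_def by (rule average_shifted_tendsto[OF assms(5)])
  with bound_nonneg have "0 \<le> \<mu>"
    by (intro LIMSEQ_le_const) auto
  with \<open>bound \<longlonglongrightarrow> \<mu>\<close> bound_nonneg have U_bound: "(\<lambda>n. U (bound n)) \<longlonglongrightarrow> U \<mu>"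
    by (intro continuous_on_tendsto_compose[OF assms(8)]) auto
  show ?thesis
    unfolding opt_value_def
  proof (rule SUP_least, clarify)
    fix e assume feasible: "feasible_policy M r B0 e" and "convergent (avg_utility U e)"
    have "\<forall>n\<ge>1. avg_utility U e n \<le> U (bound n)"
      using feasible_policy_avg_utility_le[OF feasible _ assms(4,6,7)] assms(1)
      by (simp add: bound_def)
    with \<open>convergent (avg_utility U e)\<close> U_bound have "lim (avg_utility U e) \<le> U \<mu>"
      by (intro LIMSEQ_le) (auto simp: convergent_LIMSEQ_iff)
    then show "ereal (lim (avg_utility U e)) \<le> ereal (U \<mu>)" by simp
  qed
qed

end
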